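(* A set of observables $A^1,\dots,A^m$ on $\mathbb C^d$ is informationally complete for pure states if and only if the composite physical imposition operator has no bifurcations in its physical fixed points, i.e. if and only if the number of rays contained in $\Gamma_{A^1\cdots A^m\Phi}$ is the same for every unit vector (generator state) $\Phi\in\mathbb C^d$.
   Context: States are unit vectors of $\mathbb C^d$; each observable $A^j$ is non-degenerate, identified with its orthonormal eigenbasis $\{\varphi^j_k\}_{k=0}^{d-1}$. Informationally complete (for pure states): whenever unit $\Phi,\Psi$ satisfy $|\langle\varphi^j_k,\Phi\rangle|=|\langle\varphi^j_k,\Psi\rangle|$ for all $j,k$, then $\Psi=e^{i\alpha}\Phi$. Physical imposition operator: $T_{A\Phi}\Psi=\sum_{k}|\langle\varphi_k,\Phi\rangle|\,u_k(\Psi)\,\varphi_k$, with $u_k(\Psi)=\langle\varphi_k,\Psi\rangle/|\langle\varphi_k,\Psi\rangle|$ if nonzero and $1$ otherwise. $\Gamma_{A\Phi}=\{\Psi\text{ unit}:T_{A\Phi}\Psi=\Psi\}$, $\Gamma_{A^1\cdots A^m\Phi}=\bigcap_j\Gamma_{A^j\Phi}$ (a union of rays $\{e^{i\alpha}\Psi\}$); a bifurcation means a change of the number of such rays as the generator state $\Phi$ varies. *)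

theory Defs
  imports "HOL-Analysis.Analysis" "HOL-Library.Equipollence"
begin

text \<open>Vectors of C^d are modelled as complex ^ 'n with d = CARD('n).
  The standard inner product is conjugate-linear in the first argument.\<close>

definition cinner :: "complex ^ 'n \<Rightarrow> complex ^ 'n \<Rightarrow> complex" where
  "cinner x y = (\<Sum>i\<in>UNIV. cnj (x $ i) * y $ i)"

text \<open>An observable (non-degenerate) is identified with its orthonormal eigenbasis
  phi :: 'n \<Rightarrow> complex ^ 'n (d vectors, indexed by 'n).\<close>

definition orthonormal_basis :: "('n \<Rightarrow> complex ^ 'n) \<Rightarrow> bool" where
  "orthonormal_basis phi \<longleftrightarrow> (\<forall>k l. cinner (phi k) (phi l) = (if k = l then 1 else 0))"

definition phase :: "('n \<Rightarrow> complex ^ 'n) \<Rightarrow> 'n \<Rightarrow> complex ^ 'n \<Rightarrow> complex" where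
  "phase phi k Psi =
     (if cinner (phi k) Psi \<noteq> 0 then cinner (phi k) Psi / complex_of_real (cmod (cinner (phi k) Psi))
      else 1)"

definition imposition :: "('n \<Rightarrow> complex ^ 'n) \<Rightarrow> complex ^ 'n \<Rightarrow> complex ^ 'n \<Rightarrow> complex ^ 'n" where
  "imposition phi Phi Psi =
     (\<Sum>k\<in>UNIV. (complex_of_real (cmod (cinner (phi k) Phi)) * phase phi k Psi) *s phi k)"

definition Gamma :: "('n \<Rightarrow> complex ^ 'n) \<Rightarrow> complex ^ 'n \<Rightarrow> (complex ^ 'n) set" where
  "Gamma phi Phi = {Psi. norm Psi = 1 \<and> imposition phi Phi Psi = Psi}"

definition Gamma_comp :: "nat \<Rightarrow> (nat \<Rightarrow> 'n \<Rightarrow> complex ^ 'n) \<Rightarrow> complex ^ 'n \<Rightarrow> (complex ^ 'n) set" where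
  "Gamma_comp m A Phi = (\<Inter>j\<in>{..<m}. Gamma (A j) Phi)"

definition ray :: "complex ^ 'n \<Rightarrow> (complex ^ 'n) set" where
  "ray Psi = {cis \<alpha> *s Psi | \<alpha>. True}"

definition rays :: "(complex ^ 'n) set \<Rightarrow> (complex ^ 'n) set set" where
  "rays S = ray ` S"

definition info_complete :: "nat \<Rightarrow> (nat \<Rightarrow> 'n \<Rightarrow> complex ^ 'n) \<Rightarrow> bool" where
  "info_complete m A \<longleftrightarrow>
     (\<forall>Phi Psi. norm Phi = 1 \<longrightarrow> norm Psi = 1 \<longrightarrow>
        (\<forall>j<m. \<forall>k. cmod (cinner (A j k) Phi) = cmod (cinner (A j k) Psi)) \<longrightarrow>
        (\<exists>\<alpha>::real. Psi = cis \<alpha> *s Phi))"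

definition no_bifurcation :: "nat \<Rightarrow> (nat \<Rightarrow> 'n \<Rightarrow> complex ^ 'n) \<Rightarrow> bool" where
  "no_bifurcation m A \<longleftrightarrow>
     (\<forall>Phi Phi'. norm Phi = 1 \<longrightarrow> norm Phi' = 1 \<longrightarrow>
        rays (Gamma_comp m A Phi) \<approx> rays (Gamma_comp m A Phi'))"

end

theory Submission
  imports Defs
begin

text \<open>Expanding in the eigenbasis of an observable, a unit vector \<open>\<Psi>\<close> is a fixed point of the
  imposition operator generated by \<open>\<Phi>\<close> exactly when its coefficients have the same moduli as
  those of \<open>\<Phi>\<close>. So the composite fixed point set of \<open>\<Phi>\<close> consists of the unit states that the
  measurements cannot tell apart from \<open>\<Phi>\<close>, and informational completeness says that it is the
  single ray of \<open>\<Phi>\<close>, for every \<open>\<Phi>\<close>. On the other hand an eigenvector of one observable is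
  determined up to phase by its own moduli, so for it the fixed point set is always one ray; if
  the ray count never changes it is one for every generator, which is informational
  completeness.\<close>

lemma cinner_sum_right: "cinner a (\<Sum>k\<in>S. c k *s v k) = (\<Sum>k\<in>S. c k * cinner a (v k))"
  unfolding cinner_def
  by (simp add: sum_component sum_distrib_left mult_ac) (rule sum.swap)

lemma cinner_self: "cinner x x = complex_of_real ((norm x)\<^sup>2)"
proof -
  have "cinner x x = (\<Sum>i\<in>UNIV. complex_of_real ((norm (x $ i))\<^sup>2))"
    unfolding cinner_def
    by (intro sum.cong refl) (subst complex_norm_square, simp add: mult.commute)
  also have "\<dots> = complex_of_real ((norm x)\<^sup>2)"
    unfolding norm_vec_def L2_set_def by (simp add: sum_nonneg)
  finally show ?thesis .
qed

lemma orthonormal_basis_norm: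
  assumes "orthonormal_basis phi"
  shows "norm (phi k) = 1"
proof -
  have "complex_of_real ((norm (phi k))\<^sup>2) = 1"
    using assms cinner_self[of "phi k"] unfolding orthonormal_basis_def by simp
  hence "(norm (phi k))\<^sup>2 = 1"
    by (metis of_real_1 of_real_eq_iff)
  thus ?thesis
    using norm_ge_zero[of "phi k"] by (auto simp: power2_eq_1_iff)
qed

lemma orthonormal_basis_coeff:
  assumes "orthonormal_basis phi"
  shows "cinner (phi l) (\<Sum>k\<in>UNIV. c k *s phi k) = c l"
proof -
  have "c k * cinner (phi l) (phi k) = (if l = k then c k else 0)" for k
    using assms unfolding orthonormal_basis_def by simp
  thus ?thesis unfolding cinner_sum_right by simp
qed

text \<open>With \<open>N\<close> the matrix whose columns are the basis vectors and \<open>M\<close> its conjugate transpose,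
  orthonormality is \<open>M ** N = 1\<close>, and completeness is \<open>N ** M = 1\<close>, since a left inverse of a
  square matrix is a right inverse.\<close>

lemma orthonormal_basis_expansion:
  fixes phi :: "'n::finite \<Rightarrow> complex ^ 'n"
  assumes "orthonormal_basis phi"
  shows "(\<Sum>k\<in>UNIV. cinner (phi k) x *s phi k) = x"
proof -
  define M :: "complex^'n^'n" where "M = (\<chi> k i. cnj (phi k $ i))"
  define N :: "complex^'n^'n" where "N = (\<chi> i k. phi k $ i)"
  have "M ** N = mat 1"
    using assms unfolding orthonormal_basis_def cinner_def
    by (simp add: M_def N_def matrix_matrix_mult_def mat_def vec_eq_iff)
  hence "N ** M = mat 1"
    using matrix_left_right_inverse by blast
  hence completeness: "(\<Sum>k\<in>UNIV. phi k $ i * cnj (phi k $ j)) = (if i = j then 1 else 0)" for i j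
    by (simp add: M_def N_def matrix_matrix_mult_def mat_def vec_eq_iff)
  have "(\<Sum>k\<in>UNIV. cinner (phi k) x *s phi k) $ i = x $ i" for i
  proof -
    have "(\<Sum>k\<in>UNIV. cinner (phi k) x *s phi k) $ i
        = (\<Sum>k\<in>UNIV. \<Sum>j\<in>UNIV. x $ j * (phi k $ i * cnj (phi k $ j)))"
      by (simp add: cinner_def sum_distrib_left mult_ac)
    also have "\<dots> = (\<Sum>j\<in>UNIV. x $ j * (\<Sum>k\<in>UNIV. phi k $ i * cnj (phi k $ j)))"
      by (subst sum.swap) (simp add: sum_distrib_left)
    also have "\<dots> = x $ i"
      by (simp add: completeness if_distrib cong: if_cong)
    finally show ?thesis .
  qed
  thus ?thesis by (simp add: vec_eq_iff)
qed

text \<open>The fixed-point equation in one coordinate; for \<open>c = 0\<close> the convention \<open>u\<^sub>k = 1\<close> makes it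
  read \<open>0 = |d|\<close>.\<close>

lemma eq_cmod_mult_phase_iff:
  "c = complex_of_real (cmod d) * (if c \<noteq> 0 then c / complex_of_real (cmod c) else 1)
     \<longleftrightarrow> cmod c = cmod d"
proof (cases "c = 0")
  case False
  hence "c = complex_of_real (cmod d) * (c / complex_of_real (cmod c))
           \<longleftrightarrow> complex_of_real (cmod c) = complex_of_real (cmod d)"
    by (auto simp: field_simps mult.commute)
  thus ?thesis
    using False by (simp only: of_real_eq_iff) simp
qed auto

lemma mem_Gamma_iff:
  fixes phi :: "'n::finite \<Rightarrow> complex ^ 'n"
  assumes ON: "orthonormal_basis phi"
  shows "Psi \<in> Gamma phi Phi \<longleftrightarrow>
           norm Psi = 1 \<and> (\<forall>k. cmod (cinner (phi k) Psi) = cmod (cinner (phi k) Phi))"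
proof -
  have "imposition phi Phi Psi = Psi \<longleftrightarrow>
        (\<forall>k. cinner (phi k) Psi = complex_of_real (cmod (cinner (phi k) Phi)) * phase phi k Psi)"
  proof
    assume fixed: "imposition phi Phi Psi = Psi"
    show "\<forall>k. cinner (phi k) Psi = complex_of_real (cmod (cinner (phi k) Phi)) * phase phi k Psi"
    proof
      fix l
      show "cinner (phi l) Psi = complex_of_real (cmod (cinner (phi l) Phi)) * phase phi l Psi"
        using arg_cong[OF fixed, of "cinner (phi l)"]
        unfolding imposition_def orthonormal_basis_coeff[OF ON] by simp
    qed
  next
    assume "\<forall>k. cinner (phi k) Psi = complex_of_real (cmod (cinner (phi k) Phi)) * phase phi k Psi"
    hence "imposition phi Phi Psi = (\<Sum>k\<in>UNIV. cinner (phi k) Psi *s phi k)"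
      unfolding imposition_def by simp
    thus "imposition phi Phi Psi = Psi"
      using orthonormal_basis_expansion[OF ON] by simp
  qed
  also have "\<dots> \<longleftrightarrow> (\<forall>k. cmod (cinner (phi k) Psi) = cmod (cinner (phi k) Phi))"
    unfolding phase_def using eq_cmod_mult_phase_iff by blast
  finally show ?thesis unfolding Gamma_def by blast
qed

lemma mem_Gamma_comp_iff:
  fixes A :: "nat \<Rightarrow> 'n::finite \<Rightarrow> complex ^ 'n"
  assumes "m \<ge> 1" and "\<And>j. j < m \<Longrightarrow> orthonormal_basis (A j)"
  shows "Psi \<in> Gamma_comp m A Phi \<longleftrightarrow>
           norm Psi = 1 \<and> (\<forall>j<m. \<forall>k. cmod (cinner (A j k) Phi) = cmod (cinner (A j k) Psi))"
  using assms mem_Gamma_iff[OF assms(2)] unfolding Gamma_comp_def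
  by (auto, metis lessThan_iff less_one less_le_trans)

lemma mem_Gamma_comp_self:
  fixes A :: "nat \<Rightarrow> 'n::finite \<Rightarrow> complex ^ 'n"
  assumes "m \<ge> 1" and "\<And>j. j < m \<Longrightarrow> orthonormal_basis (A j)" and "norm Phi = 1"
  shows "Phi \<in> Gamma_comp m A Phi"
  using mem_Gamma_comp_iff[OF assms(1,2)] assms(3) by simp

lemma ray_cis: "ray (cis a *s x) = ray x"
proof -
  have "ray (cis a *s x) \<subseteq> ray x" for a x
    unfolding ray_def by (auto simp: cis_mult)
  from this[of a x] this[of "-a" "cis a *s x"] show ?thesis
    by (simp add: cis_mult)
qed

lemma ray_eq_iff: "ray y = ray x \<longleftrightarrow> (\<exists>a. y = cis a *s x)"
proof
  assume "ray y = ray x"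
  moreover have "y \<in> ray y"
    unfolding ray_def by (auto intro!: exI[of _ 0])
  ultimately show "\<exists>a. y = cis a *s x"
    unfolding ray_def by auto
qed (auto simp: ray_cis)

lemma rays_eq_singleton_iff:
  assumes "x \<in> S"
  shows "rays S = {ray x} \<longleftrightarrow> (\<forall>y\<in>S. ray y = ray x)"
  using assms unfolding rays_def by auto

lemma info_complete_iff_rays_singleton:
  fixes A :: "nat \<Rightarrow> 'n::finite \<Rightarrow> complex ^ 'n"
  assumes "m \<ge> 1" and "\<And>j. j < m \<Longrightarrow> orthonormal_basis (A j)"
  shows "info_complete m A \<longleftrightarrow>
           (\<forall>Phi. norm Phi = 1 \<longrightarrow> rays (Gamma_comp m A Phi) = {ray Phi})"
proof -
  have "rays (Gamma_comp m A Phi) = {ray Phi} \<longleftrightarrow>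
          (\<forall>Psi. norm Psi = 1 \<longrightarrow>
             (\<forall>j<m. \<forall>k. cmod (cinner (A j k) Phi) = cmod (cinner (A j k) Psi)) \<longrightarrow>
             (\<exists>a. Psi = cis a *s Phi))"
    if "norm Phi = 1" for Phi
  proof -
    from mem_Gamma_comp_self[OF assms that] show ?thesis
      by (auto simp: rays_eq_singleton_iff mem_Gamma_comp_iff[OF assms] ray_eq_iff)
  qed
  thus ?thesis
    unfolding info_complete_def by simp
qed

lemma mem_Gamma_eigenvector_imp_phase_multiple:
  fixes phi :: "'n::finite \<Rightarrow> complex ^ 'n"
  assumes ON: "orthonormal_basis phi" and "Psi \<in> Gamma phi (phi l)"
  shows "\<exists>a. Psi = cis a *s phi l"
proof -
  have coeff_mod: "cmod (cinner (phi k) Psi) = (if k = l then 1 else 0)" for k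
    using assms mem_Gamma_iff[OF ON] unfolding orthonormal_basis_def by auto
  have other_coeffs: "cinner (phi k) Psi = 0" if "k \<noteq> l" for k
    using that coeff_mod[of k] by simp
  define c where "c = cinner (phi l) Psi"
  have "Psi = (\<Sum>k\<in>UNIV. cinner (phi k) Psi *s phi k)"
    by (rule orthonormal_basis_expansion[OF ON, symmetric])
  also have "\<dots> = (\<Sum>k\<in>UNIV. if k = l then c *s phi l else 0)"
    using other_coeffs by (intro sum.cong refl) (auto simp: c_def)
  finally have "Psi = c *s phi l" by simp
  moreover have "cmod c = 1"
    using coeff_mod[of l] by (simp add: c_def)
  hence "c = cis (Arg c)"
    using Arg_correct[of c] by (force simp: sgn_div_norm)
  ultimately show ?thesis by metis
qed

lemma rays_Gamma_comp_eigenvector: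
  fixes A :: "nat \<Rightarrow> 'n::finite \<Rightarrow> complex ^ 'n"
  assumes "m \<ge> 1" and "\<And>j. j < m \<Longrightarrow> orthonormal_basis (A j)"
  shows "rays (Gamma_comp m A (A 0 l)) = {ray (A 0 l)}"
proof -
  have ON0: "orthonormal_basis (A 0)"
    using assms by simp
  have "A 0 l \<in> Gamma_comp m A (A 0 l)"
    by (rule mem_Gamma_comp_self[OF assms orthonormal_basis_norm[OF ON0]])
  moreover have "ray Psi = ray (A 0 l)" if "Psi \<in> Gamma_comp m A (A 0 l)" for Psi
  proof -
    have "Psi \<in> Gamma (A 0) (A 0 l)"
      using that assms(1) unfolding Gamma_comp_def by auto
    thus ?thesis
      unfolding ray_eq_iff by (rule mem_Gamma_eigenvector_imp_phase_multiple[OF ON0])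
  qed
  ultimately show ?thesis
    using rays_eq_singleton_iff by blast
qed

theorem mainTheorem11:
  fixes m :: nat and A :: "nat \<Rightarrow> 'n::finite \<Rightarrow> complex ^ 'n"
  assumes "m \<ge> 1"
    and "\<And>j. j < m \<Longrightarrow> orthonormal_basis (A j)"
  shows "info_complete m A \<longleftrightarrow> no_bifurcation m A"
proof
  assume "info_complete m A"
  hence "\<forall>Phi. norm Phi = 1 \<longrightarrow> rays (Gamma_comp m A Phi) = {ray Phi}"
    using info_complete_iff_rays_singleton[OF assms] by simp
  thus "no_bifurcation m A"
    unfolding no_bifurcation_def by (simp add: singleton_eqpoll)
next
  assume no_bif: "no_bifurcation m A"
  define e where "e = A 0 undefined"
  have e_rays: "rays (Gamma_comp m A e) = {ray e}"
    unfolding e_def by (rule rays_Gamma_comp_eigenvector[OF assms])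
  have "norm e = 1"
    unfolding e_def using assms by (simp add: orthonormal_basis_norm)
  have "rays (Gamma_comp m A Phi) = {ray Phi}" if "norm Phi = 1" for Phi
  proof -
    have "rays (Gamma_comp m A Phi) \<approx> rays (Gamma_comp m A e)"
      using no_bif \<open>norm e = 1\<close> that unfolding no_bifurcation_def by blast
    then obtain u where "rays (Gamma_comp m A Phi) = {u}"
      unfolding e_rays eqpoll_singleton_iff by blast
    moreover have "ray Phi \<in> rays (Gamma_comp m A Phi)"
      using mem_Gamma_comp_self[OF assms that] unfolding rays_def by simp
    ultimately show ?thesis by simp
  qed
  thus "info_complete m A"
    using info_complete_iff_rays_singleton[OF assms] by simp
qed

end
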